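(* Let $\mathcal R=(R,\delta_R)$ be a differential $k$-ring such that the only $k$-algebra automorphism of $R$ commuting with $\delta_R$ is the identity. Let $\mathcal A_1,\mathcal A_2$ be $\mathcal R$-conformal superalgebras such that the canonical maps $R\to\mathrm{Ctd}_k(\mathcal A_i)$, $r\mapsto r_{\mathcal A_i}$, are $k$-algebra isomorphisms for $i=1,2$. Then $\mathcal A_1$ and $\mathcal A_2$ are isomorphic as $k$-conformal superalgebras (by restriction of scalars) if and only if they are isomorphic as $\mathcal R$-conformal superalgebras.
   Context: Let $k$ be a field of characteristic $0$. A differential $k$-ring is $(R,\delta_R)$ with $R$ a commutative unital $k$-algebra and $\delta_R$ a $k$-linear derivation. An $\mathcal R$-conformal superalgebra is a $\mathbb Z/2\mathbb Z$-graded $R$-module $\mathcal A$ with parity-preserving $k$-linear $\partial_{\mathcal A}$ and $k$-bilinear products $a_{(n)}b$ ($n\in\mathbb Z_+$) satisfying: $a_{(n)}b=0$ for $n\gg0$; $(\partial_{\mathcal A}a)_{(n)}b=-na_{(n-1)}b$, $a_{(n)}\partial_{\mathcal A}b=\partial_{\mathcal A}(a_{(n)}b)+na_{(n-1)}b$; $\partial_{\mathcal A}(ra)=r\partial_{\mathcal A}a+\delta_R(r)a$; $a_{(n)}(rb)=r(a_{(n)}b)$, $(ra)_{(n)}b=\sum_j\frac1{j!}\delta_R^j(r)(a_{(n+j)}b)$. Homomorphisms: even $R$-linear maps preserving $n$-products and commuting with $\partial$. A $k$-conformal superalgebra is one over $(k,0)$, and $\mathcal R$-conformal superalgebras are $k$-conformal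 by restriction. $\mathrm{Ctd}_k(\mathcal A)$ is the set of even $k$-linear endomorphisms $\chi$ of $\mathcal A$ with $\chi(a_{(n)}b)=a_{(n)}\chi(b)$ for all $a,b\in\mathcal A$, $n\ge0$; $r_{\mathcal A}$ denotes $a\mapsto ra$. *)

theory Defs
  imports Main
begin

text \<open>The k-algebra R is a type 'r of
class comm_ring_1 together with its structure map phi : k -> R (a unital ring homomorphism),
so that c r = phi c * r.\<close>

definition k_algebra :: "('k::field_char_0 \<Rightarrow> 'r::comm_ring_1) \<Rightarrow> bool" where
  "k_algebra phi \<longleftrightarrow> phi 1 = 1 \<and> (\<forall>c d. phi (c + d) = phi c + phi d) \<and>
     (\<forall>c d. phi (c * d) = phi c * phi d)"

definition diff_k_ring :: "('k::field_char_0 \<Rightarrow> 'r::comm_ring_1) \<Rightarrow> ('r \<Rightarrow> 'r) \<Rightarrow> bool" where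
  "diff_k_ring phi delta \<longleftrightarrow> k_algebra phi \<and>
     (\<forall>r s. delta (r + s) = delta r + delta s) \<and>
     (\<forall>c r. delta (phi c * r) = phi c * delta r) \<and>
     (\<forall>r s. delta (r * s) = r * delta s + delta r * s)"

definition diff_k_aut :: "('k::field_char_0 \<Rightarrow> 'r::comm_ring_1) \<Rightarrow> ('r \<Rightarrow> 'r) \<Rightarrow> ('r \<Rightarrow> 'r) \<Rightarrow> bool" where
  "diff_k_aut phi delta sigma \<longleftrightarrow> bij sigma \<and> sigma 1 = 1 \<and>
     (\<forall>r s. sigma (r + s) = sigma r + sigma s) \<and> (\<forall>r s. sigma (r * s) = sigma r * sigma s) \<and>
     (\<forall>c. sigma (phi c) = phi c) \<and> (\<forall>r. sigma (delta r) = delta (sigma r))"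

text \<open>Data of a Z/2Z-graded R-module with derivation and n-products (n in Z_+ = nat).
 ev / od are the even and odd parts.\<close>
record ('r, 'a) csa =
  smul :: "'r \<Rightarrow> 'a \<Rightarrow> 'a"
  ev :: "'a set"
  od :: "'a set"
  der :: "'a \<Rightarrow> 'a"
  prd :: "nat \<Rightarrow> 'a \<Rightarrow> 'a \<Rightarrow> 'a"

definition graded_module :: "('r::comm_ring_1, 'a::ab_group_add) csa \<Rightarrow> bool" where
  "graded_module A \<longleftrightarrow>
     (\<forall>r s a. smul A (r + s) a = smul A r a + smul A s a) \<and>
     (\<forall>r a b. smul A r (a + b) = smul A r a + smul A r b) \<and>
     (\<forall>r s a. smul A (r * s) a = smul A r (smul A s a)) \<and>
     (\<forall>a. smul A 1 a = a) \<and>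
     0 \<in> ev A \<and> 0 \<in> od A \<and>
     (\<forall>a\<in>ev A. \<forall>b\<in>ev A. a + b \<in> ev A) \<and> (\<forall>a\<in>od A. \<forall>b\<in>od A. a + b \<in> od A) \<and>
     (\<forall>a\<in>ev A. - a \<in> ev A) \<and> (\<forall>a\<in>od A. - a \<in> od A) \<and>
     (\<forall>r. \<forall>a\<in>ev A. smul A r a \<in> ev A) \<and> (\<forall>r. \<forall>a\<in>od A. smul A r a \<in> od A) \<and>
     ev A \<inter> od A = {0} \<and> (\<forall>x. \<exists>a\<in>ev A. \<exists>b\<in>od A. x = a + b)"

definition conformal_superalgebra ::
  "('k::field_char_0 \<Rightarrow> 'r::comm_ring_1) \<Rightarrow> ('r \<Rightarrow> 'r) \<Rightarrow> ('r, 'a::ab_group_add) csa \<Rightarrow> bool" where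
  "conformal_superalgebra phi delta A \<longleftrightarrow> graded_module A \<and>
     \<comment> \<open>partial is parity preserving and k-linear\<close>
     (\<forall>a\<in>ev A. der A a \<in> ev A) \<and> (\<forall>a\<in>od A. der A a \<in> od A) \<and>
     (\<forall>a b. der A (a + b) = der A a + der A b) \<and>
     (\<forall>c a. der A (smul A (phi c) a) = smul A (phi c) (der A a)) \<and>
     \<comment> \<open>n-products are k-bilinear\<close>
     (\<forall>n a b c. prd A n (a + b) c = prd A n a c + prd A n b c) \<and>
     (\<forall>n a b c. prd A n a (b + c) = prd A n a b + prd A n a c) \<and>
     (\<forall>n c a b. prd A n (smul A (phi c) a) b = smul A (phi c) (prd A n a b)) \<and>
     (\<forall>n c a b. prd A n a (smul A (phi c) b) = smul A (phi c) (prd A n a b)) \<and>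
     \<comment> \<open>locality\<close>
     (\<forall>a b. \<exists>N. \<forall>m\<ge>N. prd A m a b = 0) \<and>
     \<comment> \<open>sesquilinearity w.r.t. partial (n a_(n-1) b is 0 for n = 0)\<close>
     (\<forall>n a b. prd A n (der A a) b = - smul A (of_nat n) (prd A (n - 1) a b)) \<and>
     (\<forall>n a b. prd A n a (der A b) = der A (prd A n a b) + smul A (of_nat n) (prd A (n - 1) a b)) \<and>
     \<comment> \<open>compatibility with the R-action\<close>
     (\<forall>r a. der A (smul A r a) = smul A r (der A a) + smul A (delta r) a) \<and>
     (\<forall>n a r b. prd A n a (smul A r b) = smul A r (prd A n a b)) \<and>
     \<comment> \<open>(ra)_(n) b = sum_j 1/j! delta^j(r) (a_(n+j) b); the sum is finite, and any N beyond
        which the products a_(m) b vanish bounds the nonzero terms\<close>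
     (\<forall>n r a b N. (\<forall>m\<ge>N. prd A m a b = 0) \<longrightarrow>
        prd A n (smul A r a) b =
          (\<Sum>j<N. smul A (phi (inverse (fact j)) * (delta ^^ j) r) (prd A (n + j) a b)))"

definition Ctd :: "('k::field_char_0 \<Rightarrow> 'r::comm_ring_1) \<Rightarrow> ('r, 'a::ab_group_add) csa \<Rightarrow> ('a \<Rightarrow> 'a) set" where
  "Ctd phi A = {chi. (\<forall>a b. chi (a + b) = chi a + chi b) \<and>
      (\<forall>c a. chi (smul A (phi c) a) = smul A (phi c) (chi a)) \<and>
      (\<forall>a\<in>ev A. chi a \<in> ev A) \<and> (\<forall>a\<in>od A. chi a \<in> od A) \<and>
      (\<forall>n a b. chi (prd A n a b) = prd A n a (chi b))}"

definition canonical_map_iso :: "('k::field_char_0 \<Rightarrow> 'r::comm_ring_1) \<Rightarrow> ('r, 'a::ab_group_add) csa \<Rightarrow> bool" where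
  "canonical_map_iso phi A \<longleftrightarrow> bij_betw (\<lambda>r. smul A r) UNIV (Ctd phi A) \<and>
     smul A 1 = id \<and> (\<forall>r s. smul A (r * s) = smul A r \<circ> smul A s) \<and>
     (\<forall>r s. smul A (r + s) = (\<lambda>a. smul A r a + smul A s a)) \<and>
     (\<forall>c r. smul A (phi c * r) = (\<lambda>a. smul A (phi c) (smul A r a)))"

definition k_conformal_iso ::
  "('k::field_char_0 \<Rightarrow> 'r::comm_ring_1) \<Rightarrow> ('r, 'a::ab_group_add) csa \<Rightarrow> ('r, 'b::ab_group_add) csa \<Rightarrow> ('a \<Rightarrow> 'b) \<Rightarrow> bool" where
  "k_conformal_iso phi A B f \<longleftrightarrow> bij f \<and>
     (\<forall>a b. f (a + b) = f a + f b) \<and>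
     (\<forall>c a. f (smul A (phi c) a) = smul B (phi c) (f a)) \<and>
     (\<forall>a\<in>ev A. f a \<in> ev B) \<and> (\<forall>a\<in>od A. f a \<in> od B) \<and>
     (\<forall>n a b. f (prd A n a b) = prd B n (f a) (f b)) \<and>
     (\<forall>a. f (der A a) = der B (f a))"

definition R_conformal_iso ::
  "('r::comm_ring_1, 'a::ab_group_add) csa \<Rightarrow> ('r, 'b::ab_group_add) csa \<Rightarrow> ('a \<Rightarrow> 'b) \<Rightarrow> bool" where
  "R_conformal_iso A B f \<longleftrightarrow> bij f \<and>
     (\<forall>a b. f (a + b) = f a + f b) \<and>
     (\<forall>r a. f (smul A r a) = smul B r (f a)) \<and>
     (\<forall>a\<in>ev A. f a \<in> ev B) \<and> (\<forall>a\<in>od A. f a \<in> od B) \<and>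
     (\<forall>n a b. f (prd A n a b) = prd B n (f a) (f b)) \<and>
     (\<forall>a. f (der A a) = der B (f a))"

end

theory Submission
  imports Defs "HOL.Modules"
begin

(* An R-conformal isomorphism is in particular a k-conformal one, so only the
   converse needs work.  Let f : A1 -> A2 be an isomorphism of k-conformal superalgebras.
   Conjugation by f carries Ctd_k(A1) onto Ctd_k(A2); since both centroids are identified
   with R via r |-> r_A, conjugation induces a map sigma : R -> R, characterised by
   sigma(r) f(a) = f(r a).  One checks that sigma is a bijective ring map fixing k and
   commuting with delta (the latter because delta(r)_A = [der_A, r_A]).  By hypothesis
   sigma is the identity, i.e. f is R-linear. *)

lemma additive_inv:
  assumes "bij f" and "additive f"
  shows "additive (inv f)"
proof
  fix x y
  have "f (inv f x + inv f y) = x + y"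
    using assms by (simp add: additive.add bij_is_surj surj_f_inv_f)
  then show "inv f (x + y) = inv f x + inv f y"
    using assms(1) by (metis bij_is_inj inv_f_f)
qed

text \<open>If an additive bijection between graded modules preserves both parities, then so does
  its inverse: the component of the preimage in the wrong parity is mapped into
  ev \<inter> od = {0}.\<close>

lemma graded_inv_parity:
  assumes A: "graded_module A" and B: "graded_module B"
    and f: "bij f" "additive f"
    and f_ev: "\<forall>a\<in>ev A. f a \<in> ev B" and f_od: "\<forall>a\<in>od A. f a \<in> od B"
  shows "\<forall>y\<in>ev B. inv f y \<in> ev A" and "\<forall>y\<in>od B. inv f y \<in> od A"
proof -
  have f_inv: "f (inv f y) = y" for y using f(1) by (simp add: bij_is_surj surj_f_inv_f)
  have f_inj: "f x = 0 \<Longrightarrow> x = 0" for x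
    using f additive.zero by (metis bij_is_inj inv_f_f)
  have split: "\<exists>a\<in>ev A. \<exists>b\<in>od A. x = a + b" for x using A unfolding graded_module_def by blast
  have ev_diff: "y \<in> ev B \<Longrightarrow> z \<in> ev B \<Longrightarrow> y - z \<in> ev B" for y z
    using B unfolding graded_module_def by (metis diff_conv_add_uminus)
  have od_diff: "y \<in> od B \<Longrightarrow> z \<in> od B \<Longrightarrow> y - z \<in> od B" for y z
    using B unfolding graded_module_def by (metis diff_conv_add_uminus)
  have ev_od_B: "ev B \<inter> od B = {0}" using B unfolding graded_module_def by blast
  show "\<forall>y\<in>ev B. inv f y \<in> ev A"
  proof
    fix y assume y: "y \<in> ev B"
    obtain a b where ab: "a \<in> ev A" "b \<in> od A" "inv f y = a + b" using split by blast
    have "f b = y - f a" using ab f_inv f(2) by (metis additive.add add_diff_cancel_left')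
    then have "f b \<in> ev B \<inter> od B" using ev_diff y f_ev f_od ab by auto
    then have "b = 0" using ev_od_B f_inj by blast
    then show "inv f y \<in> ev A" using ab by simp
  qed
  show "\<forall>y\<in>od B. inv f y \<in> od A"
  proof
    fix y assume y: "y \<in> od B"
    obtain a b where ab: "a \<in> ev A" "b \<in> od A" "inv f y = a + b" using split by blast
    have "f a = y - f b" using ab f_inv f(2) by (metis additive.add add_diff_cancel)
    then have "f a \<in> ev B \<inter> od B" using od_diff y f_ev f_od ab by auto
    then have "a = 0" using ev_od_B f_inj by blast
    then show "inv f y \<in> od A" using ab by simp
  qed
qed

lemma k_conformal_iso_inv:
  assumes f: "k_conformal_iso phi A B f" and A: "graded_module A" and B: "graded_module B"
  shows "k_conformal_iso phi B A (inv f)"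
proof -
  have bij: "bij f" and add: "additive f"
    using f unfolding k_conformal_iso_def additive_def by auto
  have f_inv: "f (inv f y) = y" for y using bij by (simp add: bij_is_surj surj_f_inv_f)
  have inv_f: "inv f (f x) = x" for x using bij by (simp add: bij_is_inj)
  show ?thesis
    using f graded_inv_parity[OF A B bij add] additive.add[OF additive_inv[OF bij add]]
    unfolding k_conformal_iso_def
    by (metis bij_imp_bij_inv f_inv inv_f)
qed

lemma Ctd_conjugate:
  assumes f: "k_conformal_iso phi A B f" and A: "graded_module A" and B: "graded_module B"
    and chi: "chi \<in> Ctd phi A"
  shows "(\<lambda>x. f (chi (inv f x))) \<in> Ctd phi B"
proof -
  have g: "k_conformal_iso phi B A (inv f)" using k_conformal_iso_inv[OF f A B] .
  have f_inv: "f (inv f y) = y" for y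
    using f unfolding k_conformal_iso_def by (simp add: bij_is_surj surj_f_inv_f)
  show ?thesis
    using f g chi f_inv unfolding k_conformal_iso_def Ctd_def by auto
qed

lemma canonical_map_inj:
  assumes "canonical_map_iso phi A" and "smul A r = smul A s"
  shows "r = s"
  using assms unfolding canonical_map_iso_def bij_betw_def inj_on_def by blast

definition induced_scalar :: "('r, 'a) csa \<Rightarrow> ('r, 'b) csa \<Rightarrow> ('a \<Rightarrow> 'b) \<Rightarrow> 'r \<Rightarrow> 'r" where
  "induced_scalar A B f r = (SOME s. smul B s = (\<lambda>x. f (smul A r (inv f x))))"

lemma induced_scalar_smul:
  assumes f: "k_conformal_iso phi A B f" and A: "graded_module A" and B: "graded_module B"
    and cA: "canonical_map_iso phi A" and cB: "canonical_map_iso phi B"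
  shows "smul B (induced_scalar A B f r) (f a) = f (smul A r a)"
proof -
  have "smul A r \<in> Ctd phi A" using cA unfolding canonical_map_iso_def bij_betw_def by blast
  then have "(\<lambda>x. f (smul A r (inv f x))) \<in> Ctd phi B" by (rule Ctd_conjugate[OF f A B])
  then have "\<exists>s. smul B s = (\<lambda>x. f (smul A r (inv f x)))"
    using cB unfolding canonical_map_iso_def bij_betw_def by (metis UNIV_I imageE)
  then have "smul B (induced_scalar A B f r) = (\<lambda>x. f (smul A r (inv f x)))"
    unfolding induced_scalar_def by (rule someI_ex)
  moreover have "inv f (f a) = a" using f unfolding k_conformal_iso_def by (simp add: bij_is_inj)
  ultimately show ?thesis by simp
qed

lemma induced_scalar_unique:
  assumes f: "k_conformal_iso phi A B f" and A: "graded_module A" and B: "graded_module B"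
    and cA: "canonical_map_iso phi A" and cB: "canonical_map_iso phi B"
    and s: "\<And>a. smul B s (f a) = f (smul A r a)"
  shows "induced_scalar A B f r = s"
proof (rule canonical_map_inj[OF cB], rule ext)
  fix y
  obtain a where "y = f a" using f unfolding k_conformal_iso_def by (metis bij_pointE)
  then show "smul B (induced_scalar A B f r) y = smul B s y"
    using induced_scalar_smul[OF f A B cA cB] s by simp
qed

lemma smul_delta_commutator:
  assumes "conformal_superalgebra phi delta A"
  shows "smul A (delta r) a = der A (smul A r a) - smul A r (der A a)"
  using assms unfolding conformal_superalgebra_def by (simp add: algebra_simps)

text \<open>The induced map is a k-algebra automorphism of R commuting with delta: injective and
  surjective since the inverse isomorphism induces its inverse, and each algebraic identity
  follows from uniqueness of the induced scalar.\<close>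

lemma induced_scalar_diff_k_aut:
  assumes f: "k_conformal_iso phi A B f"
    and A: "conformal_superalgebra phi delta A" and B: "conformal_superalgebra phi delta B"
    and cA: "canonical_map_iso phi A" and cB: "canonical_map_iso phi B"
  shows "diff_k_aut phi delta (induced_scalar A B f)"
proof -
  let ?\<sigma> = "induced_scalar A B f"
  have gA: "graded_module A" and gB: "graded_module B"
    using A B unfolding conformal_superalgebra_def by auto
  have g: "k_conformal_iso phi B A (inv f)" using k_conformal_iso_inv[OF f gA gB] .
  have add: "additive f" using f unfolding k_conformal_iso_def additive_def by blast
  note \<sigma> = induced_scalar_smul[OF f gA gB cA cB]
  note \<sigma>_unique = induced_scalar_unique[OF f gA gB cA cB]
  have inj: "inj ?\<sigma>"
  proof (rule injI)
    fix r s assume "?\<sigma> r = ?\<sigma> s"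
    then have "f (smul A r a) = f (smul A s a)" for a using \<sigma> by metis
    then have "smul A r = smul A s"
      using f unfolding k_conformal_iso_def by (metis bij_is_inj injD ext)
    then show "r = s" by (rule canonical_map_inj[OF cA])
  qed
  have surj: "surj ?\<sigma>"
  proof (rule surjI)
    fix s
    let ?t = "induced_scalar B A (inv f) s"
    have "smul A ?t (inv f (f a)) = inv f (smul B s (f a))" for a
      by (rule induced_scalar_smul[OF g gB gA cB cA])
    then have "smul B s (f a) = f (smul A ?t a)" for a
      using f unfolding k_conformal_iso_def by (metis bij_inv_eq_iff)
    then show "?\<sigma> ?t = s" by (rule \<sigma>_unique)
  qed
  show ?thesis unfolding diff_k_aut_def
  proof (intro conjI allI)
    show "bij ?\<sigma>" using inj surj by (rule bijI)
    show "?\<sigma> 1 = 1"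
      using gA gB by (intro \<sigma>_unique) (simp add: graded_module_def)
    show "?\<sigma> (r + s) = ?\<sigma> r + ?\<sigma> s" for r s
      using gA gB \<sigma> by (intro \<sigma>_unique) (simp add: graded_module_def additive.add[OF add])
    show "?\<sigma> (r * s) = ?\<sigma> r * ?\<sigma> s" for r s
      using gA gB \<sigma> by (intro \<sigma>_unique) (simp add: graded_module_def)
    show "?\<sigma> (phi c) = phi c" for c
      using f by (intro \<sigma>_unique) (simp add: k_conformal_iso_def)
    show "?\<sigma> (delta r) = delta (?\<sigma> r)" for r
    proof (rule \<sigma>_unique)
      fix a
      have f_der: "f (der A x) = der B (f x)" for x using f unfolding k_conformal_iso_def by blast
      show "smul B (delta (?\<sigma> r)) (f a) = f (smul A (delta r) a)"
        unfolding smul_delta_commutator[OF A] smul_delta_commutator[OF B] additive.diff[OF add]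
        by (simp add: f_der flip: \<sigma>)
    qed
  qed
qed

lemma R_conformal_iso_of_trivial_induced:
  assumes f: "k_conformal_iso phi A B f" and A: "graded_module A" and B: "graded_module B"
    and cA: "canonical_map_iso phi A" and cB: "canonical_map_iso phi B"
    and triv: "induced_scalar A B f = id"
  shows "R_conformal_iso A B f"
  using f induced_scalar_smul[OF f A B cA cB] triv
  unfolding k_conformal_iso_def R_conformal_iso_def by auto

theorem mainTheorem7:
  fixes phi :: "'k::field_char_0 \<Rightarrow> 'r::comm_ring_1"
    and delta :: "'r \<Rightarrow> 'r"
    and A1 :: "('r, 'a::ab_group_add) csa"
    and A2 :: "('r, 'b::ab_group_add) csa"
  assumes "diff_k_ring phi delta"
    and "\<And>sigma. diff_k_aut phi delta sigma \<Longrightarrow> sigma = id"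
    and "conformal_superalgebra phi delta A1"
    and "conformal_superalgebra phi delta A2"
    and "canonical_map_iso phi A1"
    and "canonical_map_iso phi A2"
  shows "(\<exists>f. k_conformal_iso phi A1 A2 f) \<longleftrightarrow> (\<exists>f. R_conformal_iso A1 A2 f)"
proof
  assume "\<exists>f. k_conformal_iso phi A1 A2 f"
  then obtain f where f: "k_conformal_iso phi A1 A2 f" by blast
  have "graded_module A1" "graded_module A2"
    using assms(3,4) unfolding conformal_superalgebra_def by auto
  moreover have "induced_scalar A1 A2 f = id"
    using assms(2) induced_scalar_diff_k_aut[OF f assms(3-6)] .
  ultimately have "R_conformal_iso A1 A2 f"
    using R_conformal_iso_of_trivial_induced[OF f _ _ assms(5,6)] by blast
  then show "\<exists>f. R_conformal_iso A1 A2 f" by blast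
next
  assume "\<exists>f. R_conformal_iso A1 A2 f"
  then show "\<exists>f. k_conformal_iso phi A1 A2 f"
    unfolding R_conformal_iso_def k_conformal_iso_def by blast
qed

end
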